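(* Let $0<\ell\le\infty$, $n\in\mathbb{N}$, $J=\begin{bmatrix}0&1\\-1&0\end{bmatrix}$. Let $\alpha$ be an $n\times n$ matrix, $g\in\mathbb{C}^n$, $\mu\in\mathbb{C}$ with $\overline\mu=-\mu$, $\det(\mu\alpha\pm I_n)\ne0$, $\det(\mu\alpha\pm\mathrm{i}I_n)\ne0$, and $A=\alpha^2$. Let $\Pi(x)=\begin{bmatrix}\Lambda_1(x)&\Lambda_2(x)\end{bmatrix}$ on $(-\ell,\ell)$ with for $x\ge0$: $\Lambda_1=-\mathrm{i}\alpha\big(\mathrm{e}^{\mathrm{i}x\alpha}(\mu\alpha+I_n)g-\mathrm{e}^{-\mathrm{i}x\alpha}(\mu\alpha-I_n)g\big)$, $\Lambda_2=\mathrm{e}^{\mathrm{i}x\alpha}(\mu\alpha+I_n)g+\mathrm{e}^{-\mathrm{i}x\alpha}(\mu\alpha-I_n)g$; for $x\le0$: $\Lambda_1=-\alpha\big(\mathrm{e}^{x\alpha}(\mu\alpha+\mathrm{i}I_n)g-\mathrm{e}^{-x\alpha}(\mu\alpha-\mathrm{i}I_n)g\big)$, $\Lambda_2=\mathrm{e}^{x\alpha}(\mu\alpha+\mathrm{i}I_n)g+\mathrm{e}^{-x\alpha}(\mu\alpha-\mathrm{i}I_n)g$; and $S(x)=\int_0^x\Lambda_2\Lambda_2^*dt$ ($x>0$), $S(x)=\int_x^0\Lambda_2\Lambda_2^*dt$ ($x<0$). Assume $\det S(x)\ne0$ for $x\ne0$. Let $X=J\Pi^*S^{-1}\Pi$ (entries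 $X_{ij}$), $w_A(x,\lambda)=I_2-J\Pi(x)^*S(x)^{-1}(A-\lambda I_n)^{-1}\Pi(x)$, and $y(x,\lambda)=T_+\mathrm{e}^{xD_+}T_+^{-1}h$ for $x>0$, $y=T_-\mathrm{e}^{xD_-}T_-^{-1}h$ for $x<0$, with $h\in\mathbb{C}^2$, $T_+=\begin{bmatrix}1&1\\\mathrm{i}\sqrt\lambda&-\mathrm{i}\sqrt\lambda\end{bmatrix}$, $D_+=\mathrm{diag}(\mathrm{i}\sqrt\lambda,-\mathrm{i}\sqrt\lambda)$, $T_-=\begin{bmatrix}1&1\\\sqrt\lambda&-\sqrt\lambda\end{bmatrix}$, $D_-=\mathrm{diag}(\sqrt\lambda,-\sqrt\lambda)$ ($\sqrt\lambda$ a fixed branch, $\lambda\ne0$ not an eigenvalue of $A$). Set $\widetilde y=w_Ay$. Then for $x\ne0$ the first entry $\widetilde y_1$ of $\widetilde y$ satisfies $$-\widetilde y_1''(x,\lambda)+\breve q(x)\widetilde y_1(x,\lambda)=\lambda\,\mathrm{sgn}(x)\,\widetilde y_1(x,\lambda),\qquad \breve q(x)=2\,\mathrm{sgn}(x)\big(X_{11}(x)-X_{22}(x)\big)+2X_{12}(x)^2.$$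
   Context: This is an indefinite Sturm-Liouville equation on $(-\ell,\ell)$ obtained by Darboux transformation of $-u''=\lambda\,\mathrm{sgn}(x)u$. *)

theory Defs
  imports "HOL-Analysis.Analysis"
begin

fun matpow :: "('a::semiring_1)^'n^'n \<Rightarrow> nat \<Rightarrow> 'a^'n^'n" where
  "matpow M 0 = mat 1"
| "matpow M (Suc k) = M ** matpow M k"

definition mexp :: "complex^'n^'n \<Rightarrow> complex^'n^'n" where
  "mexp M = (\<Sum>k. inverse (fact k :: real) *\<^sub>R matpow M k)"

definition cadj :: "complex^'n^'m \<Rightarrow> complex^'m^'n" where
  "cadj M = (\<chi> i j. cnj (M $ j $ i))"

definition outer :: "complex^'n \<Rightarrow> complex^'n^'n" where
  "outer v = (\<chi> i j. v $ i * cnj (v $ j))"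

definition Jmat :: "complex^2^2" where
  "Jmat = (\<chi> i j. if i = 1 \<and> j = 2 then 1 else if i = 2 \<and> j = 1 then -1 else 0)"

definition Lam1 :: "complex^'n^'n \<Rightarrow> complex \<Rightarrow> complex^'n \<Rightarrow> real \<Rightarrow> complex^'n" where
  "Lam1 \<alpha> \<mu> g x = (if 0 \<le> x then
      (- \<i>) *s (\<alpha> *v (mexp (mat (\<i> * of_real x) ** \<alpha>) *v ((mat \<mu> ** \<alpha> + mat 1) *v g)
                      - mexp (mat (- \<i> * of_real x) ** \<alpha>) *v ((mat \<mu> ** \<alpha> - mat 1) *v g)))
    else
      - (\<alpha> *v (mexp (mat (of_real x) ** \<alpha>) *v ((mat \<mu> ** \<alpha> + mat \<i>) *v g)
               - mexp (mat (- of_real x) ** \<alpha>) *v ((mat \<mu> ** \<alpha> - mat \<i>) *v g))))"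

definition Lam2 :: "complex^'n^'n \<Rightarrow> complex \<Rightarrow> complex^'n \<Rightarrow> real \<Rightarrow> complex^'n" where
  "Lam2 \<alpha> \<mu> g x = (if 0 \<le> x then
      mexp (mat (\<i> * of_real x) ** \<alpha>) *v ((mat \<mu> ** \<alpha> + mat 1) *v g)
      + mexp (mat (- \<i> * of_real x) ** \<alpha>) *v ((mat \<mu> ** \<alpha> - mat 1) *v g)
    else
      mexp (mat (of_real x) ** \<alpha>) *v ((mat \<mu> ** \<alpha> + mat \<i>) *v g)
      + mexp (mat (- of_real x) ** \<alpha>) *v ((mat \<mu> ** \<alpha> - mat \<i>) *v g))"

definition PiM :: "complex^'n^'n \<Rightarrow> complex \<Rightarrow> complex^'n \<Rightarrow> real \<Rightarrow> complex^2^'n" where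
  "PiM \<alpha> \<mu> g x = (\<chi> i k. if k = 1 then Lam1 \<alpha> \<mu> g x $ i else Lam2 \<alpha> \<mu> g x $ i)"

definition SM :: "complex^'n^'n \<Rightarrow> complex \<Rightarrow> complex^'n \<Rightarrow> real \<Rightarrow> complex^'n^'n" where
  "SM \<alpha> \<mu> g x = (if 0 \<le> x then integral {0..x} (\<lambda>t. outer (Lam2 \<alpha> \<mu> g t))
                   else integral {x..0} (\<lambda>t. outer (Lam2 \<alpha> \<mu> g t)))"

definition XM :: "complex^'n^'n \<Rightarrow> complex \<Rightarrow> complex^'n \<Rightarrow> real \<Rightarrow> complex^2^2" where
  "XM \<alpha> \<mu> g x = Jmat ** cadj (PiM \<alpha> \<mu> g x) ** matrix_inv (SM \<alpha> \<mu> g x) ** PiM \<alpha> \<mu> g x"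

definition wA :: "complex^'n^'n \<Rightarrow> complex \<Rightarrow> complex^'n \<Rightarrow> complex \<Rightarrow> real \<Rightarrow> complex^2^2" where
  "wA \<alpha> \<mu> g lam x = mat 1 - Jmat ** cadj (PiM \<alpha> \<mu> g x) ** matrix_inv (SM \<alpha> \<mu> g x)
        ** matrix_inv (\<alpha> ** \<alpha> - mat lam) ** PiM \<alpha> \<mu> g x"

text \<open>y(x,lambda); s is the fixed branch of sqrt lambda.\<close>
definition Tp :: "complex \<Rightarrow> complex^2^2" where
  "Tp s = (\<chi> i j. if i = 1 then 1 else (if j = 1 then \<i> * s else - \<i> * s))"
definition Dp :: "complex \<Rightarrow> complex^2^2" where
  "Dp s = (\<chi> i j. if i = j then (if i = 1 then \<i> * s else - \<i> * s) else 0)"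
definition Tm :: "complex \<Rightarrow> complex^2^2" where
  "Tm s = (\<chi> i j. if i = 1 then 1 else (if j = 1 then s else - s))"
definition Dm :: "complex \<Rightarrow> complex^2^2" where
  "Dm s = (\<chi> i j. if i = j then (if i = 1 then s else - s) else 0)"

definition yv :: "complex \<Rightarrow> complex^2 \<Rightarrow> real \<Rightarrow> complex^2" where
  "yv s h x = (if 0 < x then (Tp s ** mexp (mat (of_real x) ** Dp s) ** matrix_inv (Tp s)) *v h
               else (Tm s ** mexp (mat (of_real x) ** Dm s) ** matrix_inv (Tm s)) *v h)"

definition ytil :: "complex^'n^'n \<Rightarrow> complex \<Rightarrow> complex^'n \<Rightarrow> complex \<Rightarrow> complex \<Rightarrow> complex^2 \<Rightarrow> real \<Rightarrow> complex^2" where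
  "ytil \<alpha> \<mu> g lam s h x = wA \<alpha> \<mu> g lam x *v yv s h x"

definition qbreve :: "complex^'n^'n \<Rightarrow> complex \<Rightarrow> complex^'n \<Rightarrow> real \<Rightarrow> complex" where
  "qbreve \<alpha> \<mu> g x = 2 * of_real (sgn x) * (XM \<alpha> \<mu> g x $ 1 $ 1 - XM \<alpha> \<mu> g x $ 2 $ 2)
                     + 2 * (XM \<alpha> \<mu> g x $ 1 $ 2)^2"

end

theory Submission
  imports Defs
begin

text \<open>
  On each half-line the columns \<open>\<Lambda>\<^sub>1, \<Lambda>\<^sub>2\<close> of \<open>\<Pi>\<close> satisfy
  \<open>\<Lambda>\<^sub>2' = -\<Lambda>\<^sub>1\<close> and \<open>\<Lambda>\<^sub>1' = sgn(x) A \<Lambda>\<^sub>2\<close>, while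
  \<open>S' = sgn(x) \<Lambda>\<^sub>2\<Lambda>\<^sub>2\<^sup>*\<close> and \<open>y\<^sub>1' = y\<^sub>2\<close>, \<open>y\<^sub>2' = -sgn(x) \<lambda> y\<^sub>1\<close>.
  Hence \<open>A S - S A\<^sup>* - (\<Lambda>\<^sub>1\<Lambda>\<^sub>2\<^sup>* - \<Lambda>\<^sub>2\<Lambda>\<^sub>1\<^sup>*)\<close> has derivative zero; it vanishes
  at \<open>0\<close> because \<open>\<mu>\<close> is purely imaginary, so the identity
  \<open>A S - S A\<^sup>* = \<Lambda>\<^sub>1\<Lambda>\<^sub>2\<^sup>* - \<Lambda>\<^sub>2\<Lambda>\<^sub>1\<^sup>*\<close> holds everywhere.

  The first entry of \<open>w\<^sub>A y\<close> is \<open>y\<^sub>1 - \<Lambda>\<^sub>2\<^sup>* \<psi>\<close> with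
  \<open>\<psi> = S\<^sup>-\<^sup>1 (A - \<lambda>)\<^sup>-\<^sup>1 (y\<^sub>1\<Lambda>\<^sub>1 + y\<^sub>2\<Lambda>\<^sub>2)\<close>. Since \<open>(S\<^sup>-\<^sup>1)' = -S\<^sup>-\<^sup>1 S' S\<^sup>-\<^sup>1\<close>
  and \<open>S'\<close> has rank one, \<open>\<psi>'\<close> is a multiple of \<open>S\<^sup>-\<^sup>1\<Lambda>\<^sub>2\<close>; differentiating once more,
  the identity above moves \<open>A\<^sup>*\<close> past \<open>S\<^sup>-\<^sup>1\<close>, and the remaining terms collect into the
  potential \<open>2 sgn(x) (X\<^sub>1\<^sub>1 - X\<^sub>2\<^sub>2) + 2 X\<^sub>1\<^sub>2\<^sup>2\<close>.

  The matrix exponential is differentiated as the exponential of the Banach algebra of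
  bounded endomorphisms of \<open>\<complex>\<^sup>n\<close>.
\<close>

section \<open>Matrices as a Banach algebra\<close>

typedef (overloaded) 'a endo = "UNIV :: ('a::euclidean_space \<Rightarrow>\<^sub>L 'a) set"
  morphisms Rep_endo Abs_endo by auto
setup_lifting type_definition_endo

instantiation endo :: (euclidean_space) real_normed_algebra_1
begin
lift_definition zero_endo :: "'a endo" is 0 .
lift_definition one_endo :: "'a endo" is id_blinfun .
lift_definition plus_endo :: "'a endo \<Rightarrow> 'a endo \<Rightarrow> 'a endo" is "(+)" .
lift_definition minus_endo :: "'a endo \<Rightarrow> 'a endo \<Rightarrow> 'a endo" is "(-)" .
lift_definition uminus_endo :: "'a endo \<Rightarrow> 'a endo" is uminus .
lift_definition times_endo :: "'a endo \<Rightarrow> 'a endo \<Rightarrow> 'a endo" is "(o\<^sub>L)" .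
lift_definition scaleR_endo :: "real \<Rightarrow> 'a endo \<Rightarrow> 'a endo" is scaleR .
lift_definition norm_endo :: "'a endo \<Rightarrow> real" is norm .
definition dist_endo :: "'a endo \<Rightarrow> 'a endo \<Rightarrow> real" where "dist_endo a b = norm (a - b)"
definition sgn_endo :: "'a endo \<Rightarrow> 'a endo" where "sgn_endo x = scaleR (inverse (norm x)) x"
definition uniformity_endo :: "('a endo \<times> 'a endo) filter" where
  "uniformity_endo = (INF e\<in>{0 <..}. principal {(x, y). dist x y < e})"
definition open_endo :: "'a endo set \<Rightarrow> bool"
  where "open_endo S = (\<forall>x\<in>S. \<forall>\<^sub>F (x', y) in uniformity. x' = x \<longrightarrow> y \<in> S)"
instance
proof
  show "(0::'a endo) \<noteq> 1"
  proof transfer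
    show "0 \<noteq> (id_blinfun :: 'a \<Rightarrow>\<^sub>L 'a)"
      by (metis SOME_Basis blinfun_apply_id_blinfun nonzero_Basis zero_blinfun.rep_eq)
  qed
qed (unfold dist_endo_def sgn_endo_def uniformity_endo_def open_endo_def,
     (rule refl | transfer, auto intro: blinfun_eqI norm_triangle_ineq norm_blinfun_compose
       simp: algebra_simps blinfun.bilinear_simps)+)
end

instance endo :: (euclidean_space) banach
proof
  fix X :: "nat \<Rightarrow> 'a endo" assume "Cauchy X"
  hence "Cauchy (\<lambda>n. Rep_endo (X n))"
    by (simp add: Cauchy_def dist_norm norm_endo.rep_eq minus_endo.rep_eq dist_endo_def)
  then obtain l where "(\<lambda>n. Rep_endo (X n)) \<longlonglongrightarrow> l"
    using Cauchy_convergent_iff convergent_def by blast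
  hence "X \<longlonglongrightarrow> Abs_endo l"
    by (simp add: tendsto_iff dist_norm norm_endo.rep_eq minus_endo.rep_eq Abs_endo_inverse dist_endo_def)
  thus "convergent X" by (auto simp: convergent_def)
qed

lemma endo_eqI: "(\<And>v. blinfun_apply (Rep_endo E) v = blinfun_apply (Rep_endo F) v) \<Longrightarrow> E = F"
  by (simp add: Rep_endo_inject[symmetric] blinfun_eqI)

definition endo_of_matrix :: "complex^'n^'n \<Rightarrow> (complex^'n) endo" where
  "endo_of_matrix M = Abs_endo (Blinfun ((*v) M))"

definition matrix_of_endo :: "(complex^'n) endo \<Rightarrow> complex^'n^'n" where
  "matrix_of_endo E = matrix (blinfun_apply (Rep_endo E))"

lemma Rep_endo_of_matrix: "blinfun_apply (Rep_endo (endo_of_matrix M)) = (*v) M"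
  by (simp add: endo_of_matrix_def Abs_endo_inverse bounded_linear_Blinfun_apply)

lemma endo_of_matrix_mult: "endo_of_matrix (M ** N) = endo_of_matrix M * endo_of_matrix N"
  by (rule endo_eqI) (simp add: times_endo.rep_eq Rep_endo_of_matrix matrix_vector_mul_assoc)

lemma endo_of_matrix_one: "endo_of_matrix (mat 1) = 1"
  by (rule endo_eqI) (simp add: one_endo.rep_eq Rep_endo_of_matrix)

lemma endo_of_matrix_zero: "endo_of_matrix 0 = 0"
  by (rule endo_eqI) (simp add: zero_endo.rep_eq Rep_endo_of_matrix)

lemma endo_of_matrix_scaleR: "endo_of_matrix (r *\<^sub>R M) = r *\<^sub>R endo_of_matrix M"
  by (rule endo_eqI)
     (simp add: scaleR_endo.rep_eq blinfun.scaleR_left Rep_endo_of_matrix vec_eq_iff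
       matrix_vector_mult_def scaleR_sum_right)

lemma endo_of_matrix_matpow: "endo_of_matrix (matpow M k) = endo_of_matrix M ^ k"
  by (induction k) (simp_all add: endo_of_matrix_one endo_of_matrix_mult)

lemma matrix_of_endo_of_matrix [simp]: "matrix_of_endo (endo_of_matrix M) = M"
  by (simp add: matrix_of_endo_def Rep_endo_of_matrix)

lemma matrix_of_endo_mult_left:
  "matrix_of_endo (endo_of_matrix M * E) = M ** matrix_of_endo E"
  by (simp add: matrix_of_endo_def matrix_def vec_eq_iff times_endo.rep_eq Rep_endo_of_matrix
      matrix_matrix_mult_def matrix_vector_mult_def)

lemma matrix_of_endo_scaleR: "matrix_of_endo (r *\<^sub>R E) = r *\<^sub>R matrix_of_endo E"
  by (simp add: matrix_of_endo_def matrix_def vec_eq_iff scaleR_endo.rep_eq blinfun.scaleR_left)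

lemma norm_le_sum_norm_nth: "norm (x::'a::real_normed_vector^'n) \<le> (\<Sum>i\<in>UNIV. norm (x $ i))"
  unfolding norm_vec_def by (rule L2_set_le_sum) simp

lemma bounded_linear_matrix_of_endo: "bounded_linear (matrix_of_endo :: (complex^'n) endo \<Rightarrow> _)"
proof (rule bounded_linear_intro[where K = "real CARD('n) * real CARD('n)"])
  fix E F :: "(complex^'n) endo" and r :: real
  show "matrix_of_endo (E + F) = matrix_of_endo E + matrix_of_endo F"
    by (simp add: matrix_of_endo_def matrix_def vec_eq_iff plus_endo.rep_eq blinfun.add_left)
  show "matrix_of_endo (r *\<^sub>R E) = r *\<^sub>R matrix_of_endo E"
    by (rule matrix_of_endo_scaleR)
  have entry: "norm (matrix_of_endo E $ i $ j) \<le> norm E" for i j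
  proof -
    have "norm (matrix_of_endo E $ i $ j) \<le> norm (blinfun_apply (Rep_endo E) (axis j 1))"
      by (simp add: matrix_of_endo_def matrix_def Finite_Cartesian_Product.norm_nth_le)
    also have "\<dots> \<le> norm (Rep_endo E) * norm (axis j (1::complex))" by (rule norm_blinfun)
    finally show ?thesis by (simp add: norm_endo.rep_eq inner_axis' norm_eq_1)
  qed
  have "norm (matrix_of_endo E) \<le> (\<Sum>i\<in>UNIV. \<Sum>j\<in>UNIV. norm (matrix_of_endo E $ i $ j))"
    by (intro order_trans[OF norm_le_sum_norm_nth] sum_mono norm_le_sum_norm_nth)
  also have "\<dots> \<le> (\<Sum>i\<in>(UNIV::'n set). \<Sum>j\<in>(UNIV::'n set). norm E)"
    by (intro sum_mono entry)
  finally show "norm (matrix_of_endo E) \<le> norm E * (real CARD('n) * real CARD('n))"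
    by (simp add: algebra_simps)
qed

lemma mexp_eq_exp_endo: "mexp M = matrix_of_endo (exp (endo_of_matrix M))"
proof -
  have "(\<lambda>k. endo_of_matrix M ^ k /\<^sub>R fact k) sums exp (endo_of_matrix M)"
    unfolding exp_def by (rule summable_sums[OF summable_exp_generic])
  from bounded_linear.sums[OF bounded_linear_matrix_of_endo this]
  have "(\<lambda>k. inverse (fact k :: real) *\<^sub>R matpow M k) sums matrix_of_endo (exp (endo_of_matrix M))"
    by (simp add: matrix_of_endo_scaleR flip: endo_of_matrix_matpow)
  thus ?thesis unfolding mexp_def by (rule sums_unique[symmetric])
qed

lemma mexp_zero: "mexp (0 :: complex^'n^'n) = mat 1"
  by (simp add: mexp_eq_exp_endo endo_of_matrix_zero flip: endo_of_matrix_one)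

lemma bounded_bilinear_matrix_matrix_mult:
  "bounded_bilinear ((**) :: complex^'n^'m \<Rightarrow> complex^'k^'n \<Rightarrow> _)"
  unfolding bilinear_conv_bounded_bilinear[symmetric] bilinear_def
  by (auto intro!: linearI sum.cong simp: matrix_matrix_mult_def vec_eq_iff algebra_simps
      scaleR_conv_of_real[where 'a=complex] sum.distrib sum_distrib_left)

lemma bounded_bilinear_matrix_vector_mult:
  "bounded_bilinear ((*v) :: complex^'n^'m \<Rightarrow> complex^'n \<Rightarrow> _)"
  unfolding bilinear_conv_bounded_bilinear[symmetric] bilinear_def
  by (auto intro!: linearI sum.cong simp: matrix_vector_mult_def vec_eq_iff algebra_simps
      scaleR_conv_of_real[where 'a=complex] sum.distrib sum_distrib_left)

lemma bounded_bilinear_vector_scalar_mult: "bounded_bilinear ((*s) :: complex \<Rightarrow> complex^'n \<Rightarrow> _)"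
  unfolding bilinear_conv_bounded_bilinear[symmetric] bilinear_def
  by (auto intro!: linearI simp: vec_eq_iff algebra_simps scaleR_conv_of_real[where 'a=complex])

lemma has_vector_derivative_mexp_scaleR:
  "((\<lambda>t. mexp (t *\<^sub>R B) *v w) has_vector_derivative B *v (mexp (t *\<^sub>R B) *v w)) (at t within T)"
proof -
  have "bounded_linear (\<lambda>E. matrix_of_endo E *v w)"
    by (rule bounded_linear_compose[OF _ bounded_linear_matrix_of_endo])
       (rule bounded_bilinear.bounded_linear_left[OF bounded_bilinear_matrix_vector_mult])
  from bounded_linear.has_vector_derivative[OF this
      has_vector_derivative_at_within[OF exp_scaleR_has_vector_derivative_left[of "endo_of_matrix B"]]]
  show ?thesis
    by (simp add: mexp_eq_exp_endo endo_of_matrix_scaleR matrix_of_endo_mult_left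
        flip: matrix_vector_mul_assoc)
qed

section \<open>Derivatives of vector- and matrix-valued functions\<close>

lemma bounded_linear_axis: "bounded_linear (axis i :: 'a::real_normed_vector \<Rightarrow> 'a^'n)"
proof (rule bounded_linear_intro[where K = 1])
  fix a b :: 'a and r :: real
  show "axis i (a + b) = (axis i a + axis i b :: 'a^'n)" by (simp add: axis_def vec_eq_iff)
  show "axis i (r *\<^sub>R a) = (r *\<^sub>R axis i a :: 'a^'n)" by (simp add: axis_def vec_eq_iff)
  have "norm (axis i a :: 'a^'n) \<le> (\<Sum>j\<in>UNIV. norm ((axis i a :: 'a^'n) $ j))"
    by (rule norm_le_sum_norm_nth)
  also have "\<dots> = (\<Sum>j\<in>UNIV. if j = i then norm a else 0)"
    by (rule sum.cong) (auto simp: axis_def)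
  finally show "norm (axis i a :: 'a^'n) \<le> norm a * 1" by simp
qed

lemma has_vector_derivative_vec:
  fixes f :: "real \<Rightarrow> 'a::real_normed_vector^'n"
  assumes "\<And>i. ((\<lambda>t. f t $ i) has_vector_derivative D $ i) F"
  shows "(f has_vector_derivative D) F"
proof -
  have sum_axis: "(\<Sum>i\<in>UNIV. axis i (v $ i)) = v" for v :: "'a^'n"
    by (simp add: vec_eq_iff axis_def)
  have "((\<lambda>t. \<Sum>i\<in>UNIV. axis i (f t $ i)) has_vector_derivative (\<Sum>i\<in>UNIV. axis i (D $ i))) F"
    by (intro has_vector_derivative_sum bounded_linear.has_vector_derivative[OF bounded_linear_axis] assms)
  thus ?thesis by (simp only: sum_axis)
qed

lemma has_vector_derivative_vec_nth:
  "(f has_vector_derivative D) F \<Longrightarrow> ((\<lambda>t. f t $ i) has_vector_derivative D $ i) F"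
  by (rule bounded_linear.has_vector_derivative[OF bounded_linear_vec_nth])

lemma has_vector_derivative_by_sign:
  assumes "x \<noteq> 0"
    and "0 < x \<Longrightarrow> (f_pos has_vector_derivative D) (at x)" and "\<And>t. 0 < t \<Longrightarrow> f t = f_pos t"
    and "x < 0 \<Longrightarrow> (f_neg has_vector_derivative D) (at x)" and "\<And>t. t < 0 \<Longrightarrow> f t = f_neg t"
  shows "(f has_vector_derivative D) (at x)"
proof (cases "0 < x")
  case True
  thus ?thesis
    by (intro has_vector_derivative_transform_within_open[OF assms(2) open_greaterThan]) (auto simp: assms)
next
  case False
  with assms(1) have "x < 0" by simp
  thus ?thesis
    by (intro has_vector_derivative_transform_within_open[OF assms(4) open_lessThan]) (auto simp: assms)
qed

lemma integral_has_vector_derivative_lower: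
  fixes f :: "real \<Rightarrow> 'a::banach"
  assumes f: "continuous_on {a..b} f" and t: "t \<in> {a..b}"
  shows "((\<lambda>u. integral {u..b} f) has_vector_derivative - f t) (at t within {a..b})"
proof -
  have eq: "integral {u..b} f = integral {a..b} f - integral {a..u} f" if "u \<in> {a..b}" for u
  proof -
    have "integral {a..u} f + integral {u..b} f = integral {a..b} f"
      using that Henstock_Kurzweil_Integration.integral_combine[OF _ _ integrable_continuous_real[OF f]]
      by simp
    thus ?thesis by (simp add: algebra_simps)
  qed
  have "((\<lambda>u. integral {a..b} f - integral {a..u} f) has_vector_derivative 0 - f t)
      (at t within {a..b})"
    by (intro has_vector_derivative_diff has_vector_derivative_const
        integral_has_vector_derivative f t)
  thus ?thesis
    by (intro has_vector_derivative_transform[OF t eq]) auto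
qed

lemma matrix_inv_det_nz:
  fixes A :: "'a::field^'n^'n"
  assumes "det A \<noteq> 0"
  shows "A ** matrix_inv A = mat 1" "matrix_inv A ** A = mat 1"
proof -
  have "\<exists>A'. A ** A' = mat 1 \<and> A' ** A = mat 1"
    using assms invertible_det_nz invertible_def by blast
  hence "A ** matrix_inv A = mat 1 \<and> matrix_inv A ** A = mat 1"
    unfolding matrix_inv_def by (rule someI_ex)
  thus "A ** matrix_inv A = mat 1" "matrix_inv A ** A = mat 1" by auto
qed

lemma matrix_inv_cramer:
  fixes A :: "'a::field^'n^'n"
  assumes "det A \<noteq> 0"
  shows "matrix_inv A $ i $ j = det (\<chi> a b. if b = i then axis j 1 $ a else A $ a $ b) / det A"
proof -
  have "A *v (matrix_inv A *v axis j 1) = axis j 1"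
    by (simp add: matrix_vector_mul_assoc matrix_inv_det_nz[OF assms])
  hence "matrix_inv A *v axis j 1 = (\<chi> k. det (\<chi> a b. if b = k then axis j 1 $ a else A $ a $ b) / det A)"
    using cramer[OF assms] by blast
  hence "(matrix_inv A *v axis j 1) $ i = det (\<chi> a b. if b = i then axis j 1 $ a else A $ a $ b) / det A"
    by simp
  thus ?thesis by (simp add: matrix_vector_mult_def axis_def if_distrib cong: if_cong)
qed

lemma differentiable_prod:
  fixes f :: "'i \<Rightarrow> real \<Rightarrow> 'b::real_normed_field"
  assumes "\<And>i. i \<in> I \<Longrightarrow> f i differentiable (at x)"
  shows "(\<lambda>t. \<Prod>i\<in>I. f i t) differentiable (at x)"
proof -
  from assms obtain D where "\<And>i. i \<in> I \<Longrightarrow> (f i has_derivative D i) (at x)"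
    unfolding differentiable_def by metis
  thus ?thesis unfolding differentiable_def by (blast intro: has_derivative_prod)
qed

lemma differentiable_det:
  fixes M :: "real \<Rightarrow> 'a::real_normed_field^'n^'n"
  assumes "\<And>i j. (\<lambda>t. M t $ i $ j) differentiable (at x)"
  shows "(\<lambda>t. det (M t)) differentiable (at x)"
  unfolding det_def
  by (intro differentiable_sum ballI differentiable_mult differentiable_const differentiable_prod assms)
    (simp add: finite_permutations)

lemma det_nonzero_near:
  fixes M :: "real \<Rightarrow> complex^'n^'n"
  assumes MD: "(M has_vector_derivative M') (at x)" and det_nz: "det (M x) \<noteq> 0"
  obtains e where "e > 0" and "\<And>t. t \<in> ball x e \<Longrightarrow> det (M t) \<noteq> 0"
proof -
  have "(\<lambda>t. M t $ a $ b) differentiable (at x)" for a b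
    using differentiableI_vector[OF has_vector_derivative_vec_nth[OF has_vector_derivative_vec_nth[OF MD]]] .
  from differentiable_imp_continuous_within[OF differentiable_det[OF this]]
  obtain e where "e > 0" and "\<And>y. dist x y < e \<Longrightarrow> det (M y) \<noteq> 0"
    using continuous_at_avoid[of x "\<lambda>t. det (M t)" 0] det_nz by blast
  thus ?thesis using that by (simp add: dist_commute)
qed

lemma differentiable_matrix_inv:
  fixes M :: "real \<Rightarrow> complex^'n^'n"
  assumes MD: "(M has_vector_derivative M') (at x)" and det_nz: "det (M x) \<noteq> 0"
  shows "\<exists>N. ((\<lambda>t. matrix_inv (M t)) has_vector_derivative N) (at x)"
proof -
  have entries: "(\<lambda>t. M t $ a $ b) differentiable (at x)" for a b
    using differentiableI_vector[OF has_vector_derivative_vec_nth[OF has_vector_derivative_vec_nth[OF MD]]] .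
  obtain e where "e > 0" and det_ball: "\<And>t. t \<in> ball x e \<Longrightarrow> det (M t) \<noteq> 0"
    using det_nonzero_near[OF MD det_nz] by blast
  hence x_ball: "x \<in> ball x e" by simp
  have "\<exists>d. ((\<lambda>t. matrix_inv (M t) $ i $ j) has_vector_derivative d) (at x)" for i j
  proof -
    have "(\<lambda>t. det (\<chi> a b. if b = i then axis j 1 $ a else M t $ a $ b) / det (M t))
        differentiable (at x)"
      apply (intro differentiable_divide differentiable_det differentiable_det[OF entries] det_nz)
      subgoal for a b by (cases "b = i") (simp_all add: entries)
      by (fact entries)
    then obtain d where "((\<lambda>t. det (\<chi> a b. if b = i then axis j 1 $ a else M t $ a $ b) / det (M t))
        has_vector_derivative d) (at x)"
      using vector_derivative_works by blast
    then have "((\<lambda>t. matrix_inv (M t) $ i $ j) has_vector_derivative d) (at x)"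
      by (rule has_vector_derivative_transform_within_open[OF _ open_ball x_ball])
        (simp add: matrix_inv_cramer det_ball)
    thus ?thesis by blast
  qed
  then obtain d where "((\<lambda>t. matrix_inv (M t) $ i $ j) has_vector_derivative d i j) (at x)" for i j
    by metis
  then have "((\<lambda>t. matrix_inv (M t)) has_vector_derivative (\<chi> i j. d i j)) (at x)"
    by (intro has_vector_derivative_vec) simp
  thus ?thesis by blast
qed

lemma has_vector_derivative_matrix_inv:
  fixes M :: "real \<Rightarrow> complex^'n^'n"
  assumes MD: "(M has_vector_derivative M') (at x)" and det_nz: "det (M x) \<noteq> 0"
  shows "((\<lambda>t. matrix_inv (M t)) has_vector_derivative
            - (matrix_inv (M x) ** M' ** matrix_inv (M x))) (at x)"
proof -
  obtain N where N: "((\<lambda>t. matrix_inv (M t)) has_vector_derivative N) (at x)"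
    using differentiable_matrix_inv[OF MD det_nz] by blast
  obtain e where "e > 0" and det_ball: "\<And>t. t \<in> ball x e \<Longrightarrow> det (M t) \<noteq> 0"
    using det_nonzero_near[OF MD det_nz] by blast
  hence x_ball: "x \<in> ball x e" by simp
  txt \<open>Differentiate \<open>M t ** matrix_inv (M t) = mat 1\<close>, which holds near \<open>x\<close>.\<close>
  have "((\<lambda>t. M t ** matrix_inv (M t)) has_vector_derivative M x ** N + M' ** matrix_inv (M x)) (at x)"
    by (rule bounded_bilinear.has_vector_derivative[OF bounded_bilinear_matrix_matrix_mult MD N])
  moreover have "((\<lambda>t. M t ** matrix_inv (M t)) has_vector_derivative 0) (at x)"
    by (rule has_vector_derivative_transform_within_open[OF has_vector_derivative_const open_ball x_ball])
       (simp add: matrix_inv_det_nz det_ball)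
  ultimately have "M x ** N + M' ** matrix_inv (M x) = 0"
    by (rule vector_derivative_unique_at)
  hence "M x ** N = - (M' ** matrix_inv (M x))"
    by (simp add: eq_neg_iff_add_eq_0)
  hence "matrix_inv (M x) ** (M x ** N) = - (matrix_inv (M x) ** M' ** matrix_inv (M x))"
    by (simp add: matrix_mul_assoc bounded_bilinear.minus_right[OF bounded_bilinear_matrix_matrix_mult])
  hence "N = - (matrix_inv (M x) ** M' ** matrix_inv (M x))"
    by (simp add: matrix_mul_assoc matrix_inv_det_nz[OF det_nz])
  with N show ?thesis by simp
qed

section \<open>Hermitian products\<close>

definition hinner :: "complex^'n \<Rightarrow> complex^'n \<Rightarrow> complex" where
  "hinner u v = (\<Sum>i\<in>UNIV. cnj (u $ i) * v $ i)"

definition outer_prod :: "complex^'n \<Rightarrow> complex^'n \<Rightarrow> complex^'n^'n" where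
  "outer_prod a b = (\<chi> i j. a $ i * cnj (b $ j))"

lemma outer_eq_outer_prod: "outer v = outer_prod v v"
  by (simp add: outer_def outer_prod_def)

lemma bounded_bilinear_hinner: "bounded_bilinear (hinner :: complex^'n \<Rightarrow> _)"
  unfolding bilinear_conv_bounded_bilinear[symmetric] bilinear_def
  by (auto intro!: linearI sum.cong simp: hinner_def sum.distrib algebra_simps
      scaleR_conv_of_real[where 'a=complex] sum_distrib_left)

lemma bounded_bilinear_outer_prod: "bounded_bilinear (outer_prod :: complex^'n \<Rightarrow> _)"
  unfolding bilinear_conv_bounded_bilinear[symmetric] bilinear_def
  by (auto intro!: linearI simp: outer_prod_def vec_eq_iff algebra_simps
      scaleR_conv_of_real[where 'a=complex])

lemma hinner_scalar_right: "hinner u (c *s v) = c * hinner u v"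
  by (simp add: hinner_def sum_distrib_left algebra_simps)

lemma hinner_scalar_left: "hinner (c *s u) v = cnj c * hinner u v"
  by (simp add: hinner_def sum_distrib_left algebra_simps)

lemma hinner_matrix_left: "hinner ((M::complex^'n^'n) *v u) v = hinner u (cadj M *v v)"
  by (simp add: hinner_def cadj_def matrix_vector_mult_def sum_distrib_left sum_distrib_right
      algebra_simps) (rule sum.swap)

lemma outer_prod_mult_vector: "outer_prod a b *v w = hinner b w *s a"
  by (simp add: vec_eq_iff outer_prod_def hinner_def matrix_vector_mult_def sum_distrib_left
      algebra_simps)

lemma outer_prod_matrix_left: "outer_prod ((M::complex^'n^'n) *v a) b = M ** outer_prod a b"
  by (simp add: vec_eq_iff outer_prod_def matrix_matrix_mult_def matrix_vector_mult_def
      sum_distrib_left algebra_simps)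

lemma outer_prod_matrix_right: "outer_prod a ((M::complex^'n^'n) *v b) = outer_prod a b ** cadj M"
  by (simp add: vec_eq_iff outer_prod_def matrix_matrix_mult_def matrix_vector_mult_def cadj_def
      sum_distrib_left algebra_simps)

lemma outer_prod_of_real_scalar:
  "outer_prod (of_real r *s a) b = r *\<^sub>R outer_prod a b"
  "outer_prod a (of_real r *s b) = r *\<^sub>R outer_prod a b"
  by (simp_all add: vec_eq_iff outer_prod_def scaleR_conv_of_real[where 'a=complex])

lemma matrix_vector_mult_scalar: "(M::complex^'n^'m) *v (c *s v) = c *s (M *v v)"
  by (simp add: vec_eq_iff matrix_vector_mult_def sum_distrib_left algebra_simps)

lemma scaleR_matrix_vector_mult: "(r *\<^sub>R (M::complex^'n^'m)) *v w = complex_of_real r *s (M *v w)"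
  by (simp add: vec_eq_iff matrix_vector_mult_def sum_distrib_left
      scaleR_conv_of_real[where 'a=complex] algebra_simps)

lemma mat_matrix_vector_mult: "mat c *v (v::'a::comm_semiring_1^'n) = c *s v"
proof -
  have "(\<Sum>j\<in>UNIV. (if i = j then c else 0) * v $ j) = (\<Sum>j\<in>UNIV. if j = i then c * v $ j else 0)"
    for i by (rule sum.cong) auto
  thus ?thesis by (simp add: vec_eq_iff matrix_vector_mult_def mat_def)
qed

lemmas hinner_simps =
  bounded_bilinear.add_left[OF bounded_bilinear_hinner]
  bounded_bilinear.add_right[OF bounded_bilinear_hinner]
  bounded_bilinear.diff_left[OF bounded_bilinear_hinner]
  bounded_bilinear.diff_right[OF bounded_bilinear_hinner]
  bounded_bilinear.minus_left[OF bounded_bilinear_hinner]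
  bounded_bilinear.minus_right[OF bounded_bilinear_hinner]
  hinner_scalar_right hinner_scalar_left

lemmas matrix_vector_simps =
  bounded_bilinear.add_left[OF bounded_bilinear_matrix_vector_mult]
  bounded_bilinear.add_right[OF bounded_bilinear_matrix_vector_mult]
  bounded_bilinear.diff_left[OF bounded_bilinear_matrix_vector_mult]
  bounded_bilinear.diff_right[OF bounded_bilinear_matrix_vector_mult]
  bounded_bilinear.minus_left[OF bounded_bilinear_matrix_vector_mult]
  bounded_bilinear.minus_right[OF bounded_bilinear_matrix_vector_mult]
  matrix_vector_mult_scalar scaleR_matrix_vector_mult outer_prod_mult_vector
  matrix_vector_mul_assoc[symmetric] mat_matrix_vector_mult

lemma matrix_inv_cancel:
  fixes S :: "complex^'n^'n"
  assumes "det S \<noteq> 0"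
  shows "S *v (matrix_inv S *v v) = v" and "matrix_inv S *v (S *v v) = v"
  by (simp_all add: matrix_vector_mul_assoc matrix_inv_det_nz[OF assms])

lemma cadj_mult_matrix_inv:
  fixes A S :: "complex^'n^'n"
  assumes det_S: "det S \<noteq> 0" and comm: "A ** S - S ** cadj A = K"
  shows "cadj A *v (matrix_inv S *v w) = matrix_inv S *v (A *v w) - matrix_inv S *v (K *v (matrix_inv S *v w))"
proof -
  have "K *v (matrix_inv S *v w) = A *v w - S *v (cadj A *v (matrix_inv S *v w))"
    by (simp add: matrix_vector_simps matrix_inv_cancel[OF det_S] flip: comm
        del: outer_prod_mult_vector)
  hence "matrix_inv S *v (K *v (matrix_inv S *v w))
      = matrix_inv S *v (A *v w) - cadj A *v (matrix_inv S *v w)"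
    by (simp add: matrix_vector_simps matrix_inv_cancel[OF det_S] del: outer_prod_mult_vector)
  thus ?thesis by (simp add: algebra_simps)
qed

section \<open>The Darboux transformation\<close>

lemma commutator_identity_constant:
  fixes L1 L2 :: "real \<Rightarrow> complex^'n" and S :: "real \<Rightarrow> complex^'n^'n" and A :: "complex^'n^'n"
  assumes I: "convex I" "a \<in> I" "b \<in> I"
    and dL1: "\<And>t. t \<in> I \<Longrightarrow> (L1 has_vector_derivative of_real \<sigma> *s (A *v L2 t)) (at t within I)"
    and dL2: "\<And>t. t \<in> I \<Longrightarrow> (L2 has_vector_derivative - L1 t) (at t within I)"
    and dS: "\<And>t. t \<in> I \<Longrightarrow> (S has_vector_derivative \<sigma> *\<^sub>R outer_prod (L2 t) (L2 t)) (at t within I)"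
    and comm_a: "A ** S a - S a ** cadj A = outer_prod (L1 a) (L2 a) - outer_prod (L2 a) (L1 a)"
  shows "A ** S b - S b ** cadj A = outer_prod (L1 b) (L2 b) - outer_prod (L2 b) (L1 b)"
proof -
  define G where "G t = A ** S t - S t ** cadj A - (outer_prod (L1 t) (L2 t) - outer_prod (L2 t) (L1 t))"
    for t
  have "(G has_vector_derivative 0) (at t within I)" if t: "t \<in> I" for t
    unfolding G_def[abs_def]
    by (rule has_vector_derivative_eq_rhs[OF has_vector_derivative_diff[OF has_vector_derivative_diff[OF
        bounded_linear.has_vector_derivative[OF bounded_bilinear.bounded_linear_right[OF
          bounded_bilinear_matrix_matrix_mult] dS[OF t]]
        bounded_linear.has_vector_derivative[OF bounded_bilinear.bounded_linear_left[OF
          bounded_bilinear_matrix_matrix_mult] dS[OF t]]]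
        has_vector_derivative_diff[OF
          bounded_bilinear.has_vector_derivative[OF bounded_bilinear_outer_prod dL1[OF t] dL2[OF t]]
          bounded_bilinear.has_vector_derivative[OF bounded_bilinear_outer_prod dL2[OF t] dL1[OF t]]]]])
      (simp add: outer_prod_matrix_left outer_prod_matrix_right outer_prod_of_real_scalar
        bounded_bilinear.minus_left[OF bounded_bilinear_outer_prod]
        bounded_bilinear.minus_right[OF bounded_bilinear_outer_prod]
        bounded_bilinear.scaleR_left[OF bounded_bilinear_matrix_matrix_mult]
        bounded_bilinear.scaleR_right[OF bounded_bilinear_matrix_matrix_mult]
        scaleR_conv_of_real[where 'a=complex] algebra_simps)
  hence "\<And>t. t \<in> I \<Longrightarrow> (G has_derivative (\<lambda>h. 0)) (at t within I)"
    by (simp add: has_vector_derivative_def)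
  hence "\<exists>c. \<forall>t\<in>I. G t = c" by (rule has_derivative_zero_constant[OF I(1)])
  then obtain c where "\<And>t. t \<in> I \<Longrightarrow> G t = c" by blast
  with I comm_a have "G b = 0" by (metis G_def diff_self)
  thus ?thesis by (simp add: G_def)
qed

lemma has_vector_derivative_inv_mult_rank_one:
  fixes S :: "real \<Rightarrow> complex^'n^'n" and v :: "real \<Rightarrow> complex^'n"
  assumes dS: "(S has_vector_derivative \<sigma> *\<^sub>R outer_prod l l) (at x)"
    and det_S: "det (S x) \<noteq> 0"
    and dv: "(v has_vector_derivative (of_real \<sigma> * c) *s l) (at x)"
  shows "((\<lambda>t. matrix_inv (S t) *v v t) has_vector_derivative
           (of_real \<sigma> * (c - hinner l (matrix_inv (S x) *v v x))) *s (matrix_inv (S x) *v l)) (at x)"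
  by (rule has_vector_derivative_eq_rhs[OF bounded_bilinear.has_vector_derivative[OF
        bounded_bilinear_matrix_vector_mult has_vector_derivative_matrix_inv[OF dS det_S] dv]])
    (simp add: matrix_vector_simps vec_eq_iff algebra_simps)

lemma has_vector_derivative_hinner_inv:
  fixes S :: "real \<Rightarrow> complex^'n^'n" and L1 L2 :: "real \<Rightarrow> complex^'n"
  assumes dL2: "(L2 has_vector_derivative - L1 x) (at x)"
    and dS: "(S has_vector_derivative \<sigma> *\<^sub>R outer_prod (L2 x) (L2 x)) (at x)"
    and det_S: "det (S x) \<noteq> 0"
  shows "((\<lambda>t. hinner (L2 t) (matrix_inv (S t) *v L2 t)) has_vector_derivative
           - hinner (L1 x) (matrix_inv (S x) *v L2 x) - hinner (L2 x) (matrix_inv (S x) *v L1 x)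
           - of_real \<sigma> * hinner (L2 x) (matrix_inv (S x) *v L2 x) ^ 2) (at x)"
proof -
  have "((\<lambda>t. matrix_inv (S t) *v L2 t) has_vector_derivative
      - (matrix_inv (S x) *v L1 x)
      - (of_real \<sigma> * hinner (L2 x) (matrix_inv (S x) *v L2 x)) *s (matrix_inv (S x) *v L2 x)) (at x)"
    by (rule has_vector_derivative_eq_rhs[OF bounded_bilinear.has_vector_derivative[OF
          bounded_bilinear_matrix_vector_mult has_vector_derivative_matrix_inv[OF dS det_S] dL2]])
      (simp add: matrix_vector_simps vec_eq_iff algebra_simps)
  from bounded_bilinear.has_vector_derivative[OF bounded_bilinear_hinner dL2 this]
  show ?thesis
    by (rule has_vector_derivative_eq_rhs) (simp add: hinner_simps power2_eq_square algebra_simps)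
qed

lemma has_vector_derivative_darboux_psi:
  fixes L1 L2 :: "real \<Rightarrow> complex^'n" and S :: "real \<Rightarrow> complex^'n^'n"
    and y1 y2 :: "real \<Rightarrow> complex" and A :: "complex^'n^'n" and lam :: complex
  defines "\<psi> \<equiv> \<lambda>t. matrix_inv (S t) *v (matrix_inv (A - mat lam) *v (y1 t *s L1 t + y2 t *s L2 t))"
  assumes det_A: "det (A - mat lam) \<noteq> 0" and det_S: "det (S x) \<noteq> 0"
    and dL1: "(L1 has_vector_derivative of_real \<sigma> *s (A *v L2 x)) (at x)"
    and dL2: "(L2 has_vector_derivative - L1 x) (at x)"
    and dS: "(S has_vector_derivative \<sigma> *\<^sub>R outer_prod (L2 x) (L2 x)) (at x)"
    and dy1: "(y1 has_vector_derivative y2 x) (at x)"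
    and dy2: "(y2 has_vector_derivative - (of_real \<sigma> * lam * y1 x)) (at x)"
  shows "(\<psi> has_vector_derivative
           (of_real \<sigma> * (y1 x - hinner (L2 x) (\<psi> x))) *s (matrix_inv (S x) *v L2 x)) (at x)"
proof -
  define F where "F t = y1 t *s L1 t + y2 t *s L2 t" for t
  have "(F has_vector_derivative (of_real \<sigma> * y1 x) *s ((A - mat lam) *v L2 x)) (at x)"
    unfolding F_def
    by (rule has_vector_derivative_eq_rhs[OF has_vector_derivative_add[OF
          bounded_bilinear.has_vector_derivative[OF bounded_bilinear_vector_scalar_mult dy1 dL1]
          bounded_bilinear.has_vector_derivative[OF bounded_bilinear_vector_scalar_mult dy2 dL2]]])
      (simp add: vec_eq_iff matrix_vector_simps algebra_simps)
  from bounded_linear.has_vector_derivative[OF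
      matrix_vector_mul_bounded_linear[of "matrix_inv (A - mat lam)"] this]
  have "((\<lambda>t. matrix_inv (A - mat lam) *v F t) has_vector_derivative (of_real \<sigma> * y1 x) *s L2 x) (at x)"
    by (simp add: matrix_vector_mult_scalar matrix_vector_mul_assoc matrix_inv_det_nz[OF det_A])
  from has_vector_derivative_inv_mult_rank_one[OF dS det_S this]
  show ?thesis by (simp add: \<psi>_def F_def)
qed

lemma hinner_cadj_darboux_psi:
  fixes S A :: "complex^'n^'n" and l1 l2 :: "complex^'n" and a b lam :: complex
  defines "p \<equiv> matrix_inv S *v (matrix_inv (A - mat lam) *v (a *s l1 + b *s l2))"
  assumes det_A: "det (A - mat lam) \<noteq> 0" and det_S: "det S \<noteq> 0"
    and comm: "A ** S - S ** cadj A = outer_prod l1 l2 - outer_prod l2 l1"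
  shows "hinner l2 (cadj A *v p) = a * hinner l2 (matrix_inv S *v l1) + b * hinner l2 (matrix_inv S *v l2)
    + lam * hinner l2 p - hinner l2 p * hinner l2 (matrix_inv S *v l1) + hinner l1 p * hinner l2 (matrix_inv S *v l2)"
proof -
  have AR: "A *v (matrix_inv (A - mat lam) *v w) = w + lam *s (matrix_inv (A - mat lam) *v w)" for w
  proof -
    have "((A - mat lam) ** matrix_inv (A - mat lam)) *v w = w"
      by (simp add: matrix_inv_det_nz[OF det_A])
    thus ?thesis by (simp add: matrix_vector_simps algebra_simps)
  qed
  show ?thesis
    unfolding p_def cadj_mult_matrix_inv[OF det_S comm]
    by (simp add: AR matrix_vector_simps hinner_simps algebra_simps)
qed

lemma darboux_ode_const_sign:
  fixes L1 L2 :: "real \<Rightarrow> complex^'n" and S :: "real \<Rightarrow> complex^'n^'n"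
    and y1 y2 :: "real \<Rightarrow> complex" and A :: "complex^'n^'n" and lam :: complex and \<sigma> x :: real
  defines "\<psi> \<equiv> \<lambda>t. matrix_inv (S t) *v (matrix_inv (A - mat lam) *v (y1 t *s L1 t + y2 t *s L2 t))"
    and "X11 \<equiv> \<lambda>t. hinner (L2 t) (matrix_inv (S t) *v L1 t)"
    and "X12 \<equiv> \<lambda>t. hinner (L2 t) (matrix_inv (S t) *v L2 t)"
    and "X22 \<equiv> \<lambda>t. - hinner (L1 t) (matrix_inv (S t) *v L2 t)"
  defines "y \<equiv> \<lambda>t. y1 t - hinner (L2 t) (\<psi> t)"
  defines "y' \<equiv> \<lambda>t. y2 t + hinner (L1 t) (\<psi> t) - of_real \<sigma> * X12 t * y t"
  assumes sign: "\<sigma> = 1 \<or> \<sigma> = -1"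
    and det_A: "det (A - mat lam) \<noteq> 0" and det_S: "det (S x) \<noteq> 0"
    and dL1: "(L1 has_vector_derivative of_real \<sigma> *s (A *v L2 x)) (at x)"
    and dL2: "(L2 has_vector_derivative - L1 x) (at x)"
    and dS: "(S has_vector_derivative \<sigma> *\<^sub>R outer_prod (L2 x) (L2 x)) (at x)"
    and dy1: "(y1 has_vector_derivative y2 x) (at x)"
    and dy2: "(y2 has_vector_derivative - (of_real \<sigma> * lam * y1 x)) (at x)"
    and comm: "A ** S x - S x ** cadj A = outer_prod (L1 x) (L2 x) - outer_prod (L2 x) (L1 x)"
  shows "(y has_vector_derivative y' x) (at x)"
    and "\<exists>D. (y' has_vector_derivative D) (at x) \<and>
           - D + (2 * of_real \<sigma> * (X11 x - X22 x) + 2 * X12 x ^ 2) * y x = lam * of_real \<sigma> * y x"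
proof -
  define s where "s = complex_of_real \<sigma>"
  have d\<psi>: "(\<psi> has_vector_derivative (s * y x) *s (matrix_inv (S x) *v L2 x)) (at x)"
    using has_vector_derivative_darboux_psi[OF det_A det_S dL1 dL2 dS dy1 dy2]
    by (simp add: \<psi>_def y_def s_def)
  show dy: "(y has_vector_derivative y' x) (at x)"
    unfolding y_def[abs_def]
    by (rule has_vector_derivative_eq_rhs[OF has_vector_derivative_diff[OF dy1
          bounded_bilinear.has_vector_derivative[OF bounded_bilinear_hinner dL2 d\<psi>]]])
      (simp add: hinner_simps y'_def X12_def s_def y_def algebra_simps)
  have dX12: "(X12 has_vector_derivative X22 x - X11 x - s * X12 x ^ 2) (at x)"
    unfolding X12_def[abs_def]
    by (rule has_vector_derivative_eq_rhs[OF has_vector_derivative_hinner_inv[where ?L1.0=L1, OF dL2 dS det_S]])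
      (simp add: X11_def X12_def X22_def s_def)
  define D where "D = - (s * lam * y1 x) - s * y x * X22 x + s * hinner (L2 x) (cadj A *v \<psi> x)
      - s * X12 x * y' x - s * (X22 x - X11 x - s * X12 x ^ 2) * y x"
  have "(y' has_vector_derivative D) (at x)"
    unfolding y'_def[abs_def]
    by (rule has_vector_derivative_eq_rhs[OF has_vector_derivative_diff[OF has_vector_derivative_add[OF
          dy2 bounded_bilinear.has_vector_derivative[OF bounded_bilinear_hinner dL1 d\<psi>]]
          has_vector_derivative_mult[OF has_vector_derivative_mult_right[OF dX12] dy]]])
      (simp add: D_def hinner_simps hinner_matrix_left X22_def s_def algebra_simps)
  moreover have "- D + (2 * s * (X11 x - X22 x) + 2 * X12 x ^ 2) * y x = lam * s * y x"
  proof -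
    define P where "P = hinner (L2 x) (\<psi> x)"
    define Q where "Q = hinner (L1 x) (\<psi> x)"
    have adj: "hinner (L2 x) (cadj A *v \<psi> x)
        = y1 x * X11 x + y2 x * X12 x + lam * P - P * X11 x + Q * X12 x"
      unfolding P_def Q_def X11_def X12_def \<psi>_def by (rule hinner_cadj_darboux_psi[OF det_A det_S comm])
    have y: "y x = y1 x - P" and y': "y' x = y2 x + Q - s * X12 x * y x"
      by (simp_all add: y_def y'_def P_def Q_def s_def)
    from sign have "s = 1 \<or> s = -1" by (auto simp: s_def)
    thus ?thesis
      by (elim disjE) (simp_all add: D_def adj y' y algebra_simps power2_eq_square)
  qed
  ultimately show "\<exists>D. (y' has_vector_derivative D) (at x) \<and>
      - D + (2 * of_real \<sigma> * (X11 x - X22 x) + 2 * X12 x ^ 2) * y x = lam * of_real \<sigma> * y x"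
    by (auto simp: s_def)
qed

lemma darboux_transform_ode:
  fixes L1 L2 :: "real \<Rightarrow> complex^'n" and S :: "real \<Rightarrow> complex^'n^'n"
    and y1 y2 :: "real \<Rightarrow> complex" and A :: "complex^'n^'n" and lam :: complex and U :: "real set"
  defines "\<psi> \<equiv> \<lambda>t. matrix_inv (S t) *v (matrix_inv (A - mat lam) *v (y1 t *s L1 t + y2 t *s L2 t))"
    and "X11 \<equiv> \<lambda>t. hinner (L2 t) (matrix_inv (S t) *v L1 t)"
    and "X12 \<equiv> \<lambda>t. hinner (L2 t) (matrix_inv (S t) *v L2 t)"
    and "X22 \<equiv> \<lambda>t. - hinner (L1 t) (matrix_inv (S t) *v L2 t)"
  defines "y \<equiv> \<lambda>t. y1 t - hinner (L2 t) (\<psi> t)"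
  assumes nz: "\<And>x. x \<in> U \<Longrightarrow> x \<noteq> 0"
    and det_A: "det (A - mat lam) \<noteq> 0" and det_S: "\<And>x. x \<in> U \<Longrightarrow> det (S x) \<noteq> 0"
    and dL1: "\<And>x. x \<in> U \<Longrightarrow> (L1 has_vector_derivative of_real (sgn x) *s (A *v L2 x)) (at x)"
    and dL2: "\<And>x. x \<in> U \<Longrightarrow> (L2 has_vector_derivative - L1 x) (at x)"
    and dS: "\<And>x. x \<in> U \<Longrightarrow> (S has_vector_derivative sgn x *\<^sub>R outer_prod (L2 x) (L2 x)) (at x)"
    and dy1: "\<And>x. x \<in> U \<Longrightarrow> (y1 has_vector_derivative y2 x) (at x)"
    and dy2: "\<And>x. x \<in> U \<Longrightarrow> (y2 has_vector_derivative - (of_real (sgn x) * lam * y1 x)) (at x)"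
    and comm: "\<And>x. x \<in> U \<Longrightarrow>
      A ** S x - S x ** cadj A = outer_prod (L1 x) (L2 x) - outer_prod (L2 x) (L1 x)"
  shows "\<exists>y' y''. \<forall>x\<in>U. (y has_vector_derivative y' x) (at x) \<and> (y' has_vector_derivative y'' x) (at x)
    \<and> - y'' x + (2 * of_real (sgn x) * (X11 x - X22 x) + 2 * X12 x ^ 2) * y x = lam * of_real (sgn x) * y x"
proof -
  define y' where "y' t = y2 t + hinner (L1 t) (\<psi> t) - of_real (sgn t) * X12 t * y t" for t
  have ode_at: "(y has_vector_derivative y' x) (at x) \<and> (y' has_vector_derivative vector_derivative y' (at x)) (at x)
    \<and> - vector_derivative y' (at x) + (2 * of_real (sgn x) * (X11 x - X22 x) + 2 * X12 x ^ 2) * y x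
        = lam * of_real (sgn x) * y x" if x: "x \<in> U" for x
  proof -
    define y'_x where "y'_x t = y2 t + hinner (L1 t) (\<psi> t) - of_real (sgn x) * X12 t * y t" for t
    have sign: "sgn x = 1 \<or> sgn x = -1"
      using nz[OF x] by (auto simp: sgn_real_def)
    note ode = darboux_ode_const_sign[OF sign det_A det_S[OF x] dL1[OF x] dL2[OF x] dS[OF x]
        dy1[OF x] dy2[OF x] comm[OF x]]
    have dy: "(y has_vector_derivative y'_x x) (at x)"
      using ode(1) unfolding y_def \<psi>_def y'_x_def X12_def .
    obtain D where dD: "(y'_x has_vector_derivative D) (at x)"
      and eq: "- D + (2 * of_real (sgn x) * (X11 x - X22 x) + 2 * X12 x ^ 2) * y x
                 = lam * of_real (sgn x) * y x"
      using ode(2) unfolding y_def \<psi>_def y'_x_def X11_def X12_def X22_def by blast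
    txt \<open>\<open>y'\<close> and \<open>y'_x\<close> agree on the open half-line containing \<open>x\<close>.\<close>
    define V where "V = {t. sgn t = sgn x}"
    have "V = (if 0 < x then {0<..} else {..<0})"
      using nz[OF x] by (auto simp: V_def sgn_real_def split: if_splits)
    hence "open V" by simp
    have "(y' has_vector_derivative D) (at x)"
      by (rule has_vector_derivative_transform_within_open[OF dD \<open>open V\<close>])
        (auto simp: V_def y'_def y'_x_def)
    moreover from this have "vector_derivative y' (at x) = D"
      by (rule vector_derivative_at)
    moreover have "y' x = y'_x x" by (simp add: y'_def y'_x_def)
    ultimately show ?thesis using dy eq by simp
  qed
  show ?thesis
    by (rule exI[of _ y'], rule exI[of _ "\<lambda>x. vector_derivative y' (at x)"]) (use ode_at in blast)
qed

section \<open>The functions of the theorem\<close>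

lemma mat_matrix_mult_nth: "(mat a ** (M::'a::semiring_1^'n^'m)) $ i $ j = a * M $ i $ j"
proof -
  have "(mat a ** M) $ i $ j = (\<Sum>k\<in>UNIV. (if i = k then a else 0) * M $ k $ j)"
    by (simp add: matrix_matrix_mult_def mat_def)
  also have "\<dots> = (\<Sum>k\<in>UNIV. if k = i then a * M $ k $ j else 0)"
    by (rule sum.cong) auto
  finally show ?thesis by simp
qed

lemma mat_of_real_mult: "mat (c * of_real x) ** (M::complex^'n^'m) = x *\<^sub>R (mat c ** M)"
  by (simp add: vec_eq_iff mat_matrix_mult_nth) (simp add: scaleR_conv_of_real)

lemma mat_neg_of_real_mult: "mat (- (c * of_real x)) ** (M::complex^'n^'m) = x *\<^sub>R (mat (- c) ** M)"
  using mat_of_real_mult[of "- c" x M] by simp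

text \<open>\<open>\<Lambda>\<^sub>1, \<Lambda>\<^sub>2\<close> coincide with the branches for \<open>(c, d) = (\<i>, 1)\<close> on \<open>x \<ge> 0\<close>
  and for \<open>(c, d) = (1, \<i>)\<close> on \<open>x \<le> 0\<close>; in both cases \<open>c d = \<i>\<close>.\<close>

definition Lam1_branch :: "complex^'n^'n \<Rightarrow> complex \<Rightarrow> complex \<Rightarrow> complex \<Rightarrow> complex^'n \<Rightarrow> real \<Rightarrow> complex^'n"
  where "Lam1_branch \<alpha> \<mu> c d g t = (- c) *s (\<alpha> *v
    (mexp (t *\<^sub>R (mat c ** \<alpha>)) *v ((mat \<mu> ** \<alpha> + mat d) *v g)
     - mexp (t *\<^sub>R (mat (- c) ** \<alpha>)) *v ((mat \<mu> ** \<alpha> - mat d) *v g)))"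

definition Lam2_branch :: "complex^'n^'n \<Rightarrow> complex \<Rightarrow> complex \<Rightarrow> complex \<Rightarrow> complex^'n \<Rightarrow> real \<Rightarrow> complex^'n"
  where "Lam2_branch \<alpha> \<mu> c d g t =
    mexp (t *\<^sub>R (mat c ** \<alpha>)) *v ((mat \<mu> ** \<alpha> + mat d) *v g)
    + mexp (t *\<^sub>R (mat (- c) ** \<alpha>)) *v ((mat \<mu> ** \<alpha> - mat d) *v g)"

lemma has_vector_derivative_mexp_mat_mult:
  "((\<lambda>t. mexp (t *\<^sub>R (mat c ** \<alpha>)) *v w) has_vector_derivative
     c *s (\<alpha> *v (mexp (t *\<^sub>R (mat c ** \<alpha>)) *v w))) (at t within T)"
  using has_vector_derivative_mexp_scaleR[of "mat c ** \<alpha>"] by (simp add: matrix_vector_simps)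

lemma has_vector_derivative_Lam2_branch:
  "(Lam2_branch \<alpha> \<mu> c d g has_vector_derivative - Lam1_branch \<alpha> \<mu> c d g t) (at t within T)"
  unfolding Lam2_branch_def[abs_def]
  by (rule has_vector_derivative_eq_rhs[OF has_vector_derivative_add[OF
        has_vector_derivative_mexp_mat_mult has_vector_derivative_mexp_mat_mult]])
    (simp add: Lam1_branch_def matrix_vector_simps vec_eq_iff algebra_simps)

lemma has_vector_derivative_Lam1_branch:
  "(Lam1_branch \<alpha> \<mu> c d g has_vector_derivative
     (- c\<^sup>2) *s ((\<alpha> ** \<alpha>) *v Lam2_branch \<alpha> \<mu> c d g t)) (at t within T)"
  unfolding Lam1_branch_def[abs_def]
  by (rule has_vector_derivative_eq_rhs[OF
        bounded_linear.has_vector_derivative[OF bounded_bilinear.bounded_linear_right[OF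
          bounded_bilinear_vector_scalar_mult]]
        , OF bounded_linear.has_vector_derivative[OF matrix_vector_mul_bounded_linear
          has_vector_derivative_diff[OF has_vector_derivative_mexp_mat_mult
            has_vector_derivative_mexp_mat_mult]]])
    (simp add: Lam2_branch_def matrix_vector_simps vec_eq_iff algebra_simps power2_eq_square)

lemma Lam1_branch_zero: "Lam1_branch \<alpha> \<mu> c d g 0 = (- 2 * c * d) *s (\<alpha> *v g)"
  by (simp add: Lam1_branch_def mexp_zero matrix_vector_simps vec_eq_iff algebra_simps;
      simp add: matrix_vector_mult_def sum_distrib_left algebra_simps)

lemma Lam2_branch_zero: "Lam2_branch \<alpha> \<mu> c d g 0 = (2 * \<mu>) *s (\<alpha> *v g)"
  by (simp add: Lam2_branch_def mexp_zero matrix_vector_simps vec_eq_iff algebra_simps;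
      simp add: matrix_vector_mult_def sum_distrib_left algebra_simps)

lemma Lam_nonneg:
  assumes "0 \<le> t"
  shows "Lam1 \<alpha> \<mu> g t = Lam1_branch \<alpha> \<mu> \<i> 1 g t" and "Lam2 \<alpha> \<mu> g t = Lam2_branch \<alpha> \<mu> \<i> 1 g t"
  using assms
  by (simp_all add: Lam1_def Lam2_def Lam1_branch_def Lam2_branch_def mat_of_real_mult
      mat_neg_of_real_mult)

lemma Lam_nonpos:
  assumes "t \<le> 0"
  shows "Lam1 \<alpha> \<mu> g t = Lam1_branch \<alpha> \<mu> 1 \<i> g t" and "Lam2 \<alpha> \<mu> g t = Lam2_branch \<alpha> \<mu> 1 \<i> g t"
proof -
  have "Lam1 \<alpha> \<mu> g t = Lam1_branch \<alpha> \<mu> 1 \<i> g t \<and> Lam2 \<alpha> \<mu> g t = Lam2_branch \<alpha> \<mu> 1 \<i> g t"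
  proof (cases "t = 0")
    case True
    thus ?thesis by (simp add: Lam_nonneg Lam1_branch_zero Lam2_branch_zero)
  next
    case False
    with assms mat_of_real_mult[of 1 t \<alpha>] mat_of_real_mult[of "-1" t \<alpha>] show ?thesis
      by (simp add: Lam1_def Lam2_def Lam1_branch_def Lam2_branch_def)
  qed
  thus "Lam1 \<alpha> \<mu> g t = Lam1_branch \<alpha> \<mu> 1 \<i> g t" and "Lam2 \<alpha> \<mu> g t = Lam2_branch \<alpha> \<mu> 1 \<i> g t"
    by simp_all
qed

lemma continuous_on_outer_Lam2_branch:
  "continuous_on T (\<lambda>t. outer_prod (Lam2_branch \<alpha> \<mu> c d g t) (Lam2_branch \<alpha> \<mu> c d g t))"
  by (intro bounded_bilinear.continuous_on[OF bounded_bilinear_outer_prod]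
      continuous_on_vector_derivative; rule has_vector_derivative_Lam2_branch)

lemma SM_nonneg:
  "0 \<le> x \<Longrightarrow> SM \<alpha> \<mu> g x
     = integral {0..x} (\<lambda>t. outer_prod (Lam2_branch \<alpha> \<mu> \<i> 1 g t) (Lam2_branch \<alpha> \<mu> \<i> 1 g t))"
  unfolding SM_def by (auto intro!: integral_cong simp: outer_eq_outer_prod Lam_nonneg)

lemma SM_nonpos:
  "x \<le> 0 \<Longrightarrow> SM \<alpha> \<mu> g x
     = integral {x..0} (\<lambda>t. outer_prod (Lam2_branch \<alpha> \<mu> 1 \<i> g t) (Lam2_branch \<alpha> \<mu> 1 \<i> g t))"
  unfolding SM_def by (cases "x = 0") (auto intro!: integral_cong simp: outer_eq_outer_prod Lam_nonpos)

lemma Lam_branch_commutator_zero: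
  assumes "cnj \<mu> = - \<mu>" and "c * d = \<i>"
  shows "outer_prod (Lam1_branch \<alpha> \<mu> c d g 0) (Lam2_branch \<alpha> \<mu> c d g 0)
       - outer_prod (Lam2_branch \<alpha> \<mu> c d g 0) (Lam1_branch \<alpha> \<mu> c d g 0) = 0"
proof -
  have "Lam1_branch \<alpha> \<mu> c d g 0 = (- 2 * \<i>) *s (\<alpha> *v g)"
    using assms(2) by (simp add: Lam1_branch_zero mult.assoc)
  with assms(1) show ?thesis
    by (simp add: Lam2_branch_zero vec_eq_iff outer_prod_def algebra_simps)
qed

lemma SM_commutator:
  assumes "cnj \<mu> = - \<mu>"
  shows "(\<alpha> ** \<alpha>) ** SM \<alpha> \<mu> g x - SM \<alpha> \<mu> g x ** cadj (\<alpha> ** \<alpha>)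
       = outer_prod (Lam1 \<alpha> \<mu> g x) (Lam2 \<alpha> \<mu> g x) - outer_prod (Lam2 \<alpha> \<mu> g x) (Lam1 \<alpha> \<mu> g x)"
proof (cases "0 \<le> x")
  case True
  define S where "S t = integral {0..t} (\<lambda>\<tau>. outer_prod (Lam2_branch \<alpha> \<mu> \<i> 1 g \<tau>) (Lam2_branch \<alpha> \<mu> \<i> 1 g \<tau>))"
    for t
  have "(\<alpha> ** \<alpha>) ** S x - S x ** cadj (\<alpha> ** \<alpha>)
      = outer_prod (Lam1_branch \<alpha> \<mu> \<i> 1 g x) (Lam2_branch \<alpha> \<mu> \<i> 1 g x)
      - outer_prod (Lam2_branch \<alpha> \<mu> \<i> 1 g x) (Lam1_branch \<alpha> \<mu> \<i> 1 g x)"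
  proof (rule commutator_identity_constant[where I = "{0..x}" and a = 0 and \<sigma> = 1])
    fix t assume t: "t \<in> {0..x}"
    show "(Lam1_branch \<alpha> \<mu> \<i> 1 g has_vector_derivative
        of_real 1 *s ((\<alpha> ** \<alpha>) *v Lam2_branch \<alpha> \<mu> \<i> 1 g t)) (at t within {0..x})"
      using has_vector_derivative_Lam1_branch[of \<alpha> \<mu> \<i> 1 g t "{0..x}"] by simp
    show "(S has_vector_derivative 1 *\<^sub>R outer_prod (Lam2_branch \<alpha> \<mu> \<i> 1 g t) (Lam2_branch \<alpha> \<mu> \<i> 1 g t))
        (at t within {0..x})"
      unfolding S_def[abs_def] using integral_has_vector_derivative[OF continuous_on_outer_Lam2_branch t]
      by simp
  qed (use True assms in \<open>simp_all add: S_def has_vector_derivative_Lam2_branch Lam_branch_commutator_zero\<close>)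
  thus ?thesis using True by (simp add: Lam_nonneg SM_nonneg S_def)
next
  case False
  define S where "S t = integral {t..0} (\<lambda>\<tau>. outer_prod (Lam2_branch \<alpha> \<mu> 1 \<i> g \<tau>) (Lam2_branch \<alpha> \<mu> 1 \<i> g \<tau>))"
    for t
  have "(\<alpha> ** \<alpha>) ** S x - S x ** cadj (\<alpha> ** \<alpha>)
      = outer_prod (Lam1_branch \<alpha> \<mu> 1 \<i> g x) (Lam2_branch \<alpha> \<mu> 1 \<i> g x)
      - outer_prod (Lam2_branch \<alpha> \<mu> 1 \<i> g x) (Lam1_branch \<alpha> \<mu> 1 \<i> g x)"
  proof (rule commutator_identity_constant[where I = "{x..0}" and a = 0 and \<sigma> = "-1"])
    fix t assume t: "t \<in> {x..0}"
    show "(Lam1_branch \<alpha> \<mu> 1 \<i> g has_vector_derivative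
        of_real (-1) *s ((\<alpha> ** \<alpha>) *v Lam2_branch \<alpha> \<mu> 1 \<i> g t)) (at t within {x..0})"
      using has_vector_derivative_Lam1_branch[of \<alpha> \<mu> 1 \<i> g t "{x..0}"] by simp
    show "(S has_vector_derivative (-1) *\<^sub>R outer_prod (Lam2_branch \<alpha> \<mu> 1 \<i> g t) (Lam2_branch \<alpha> \<mu> 1 \<i> g t))
        (at t within {x..0})"
      unfolding S_def[abs_def] using integral_has_vector_derivative_lower[OF continuous_on_outer_Lam2_branch t]
      by simp
  qed (use False assms in \<open>simp_all add: S_def has_vector_derivative_Lam2_branch Lam_branch_commutator_zero\<close>)
  thus ?thesis using False by (simp add: Lam_nonpos SM_nonpos S_def)
qed

lemma has_vector_derivative_Lam1:
  assumes "x \<noteq> 0"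
  shows "(Lam1 \<alpha> \<mu> g has_vector_derivative of_real (sgn x) *s ((\<alpha> ** \<alpha>) *v Lam2 \<alpha> \<mu> g x)) (at x)"
proof (rule has_vector_derivative_by_sign[OF assms])
  show "(Lam1_branch \<alpha> \<mu> \<i> 1 g has_vector_derivative
      of_real (sgn x) *s ((\<alpha> ** \<alpha>) *v Lam2 \<alpha> \<mu> g x)) (at x)" if "0 < x"
    using that has_vector_derivative_Lam1_branch[of \<alpha> \<mu> \<i> 1 g x UNIV] by (simp add: Lam_nonneg)
  show "(Lam1_branch \<alpha> \<mu> 1 \<i> g has_vector_derivative
      of_real (sgn x) *s ((\<alpha> ** \<alpha>) *v Lam2 \<alpha> \<mu> g x)) (at x)" if "x < 0"
    using that has_vector_derivative_Lam1_branch[of \<alpha> \<mu> 1 \<i> g x UNIV] by (simp add: Lam_nonpos)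
qed (simp_all add: Lam_nonneg Lam_nonpos)

lemma has_vector_derivative_Lam2:
  assumes "x \<noteq> 0"
  shows "(Lam2 \<alpha> \<mu> g has_vector_derivative - Lam1 \<alpha> \<mu> g x) (at x)"
proof (rule has_vector_derivative_by_sign[OF assms])
  show "(Lam2_branch \<alpha> \<mu> \<i> 1 g has_vector_derivative - Lam1 \<alpha> \<mu> g x) (at x)" if "0 < x"
    using that by (simp add: Lam_nonneg has_vector_derivative_Lam2_branch)
  show "(Lam2_branch \<alpha> \<mu> 1 \<i> g has_vector_derivative - Lam1 \<alpha> \<mu> g x) (at x)" if "x < 0"
    using that by (simp add: Lam_nonpos has_vector_derivative_Lam2_branch)
qed (simp_all add: Lam_nonneg Lam_nonpos)

lemma has_vector_derivative_SM:
  assumes "x \<noteq> 0"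
  shows "(SM \<alpha> \<mu> g has_vector_derivative sgn x *\<^sub>R outer_prod (Lam2 \<alpha> \<mu> g x) (Lam2 \<alpha> \<mu> g x)) (at x)"
proof (rule has_vector_derivative_by_sign[OF assms])
  assume "0 < x"
  hence "x \<in> interior {0..x + 1}" by simp
  with integral_has_vector_derivative[OF continuous_on_outer_Lam2_branch, of x 0 "x + 1"] \<open>0 < x\<close>
  show "((\<lambda>t. integral {0..t} (\<lambda>t. outer_prod (Lam2_branch \<alpha> \<mu> \<i> 1 g t) (Lam2_branch \<alpha> \<mu> \<i> 1 g t)))
      has_vector_derivative sgn x *\<^sub>R outer_prod (Lam2 \<alpha> \<mu> g x) (Lam2 \<alpha> \<mu> g x)) (at x)"
    by (simp add: at_within_interior[of x "{0..x + 1}"] Lam_nonneg)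
next
  assume "x < 0"
  hence "x \<in> interior {x - 1..0}" by simp
  with integral_has_vector_derivative_lower[OF continuous_on_outer_Lam2_branch, of x "x - 1" 0] \<open>x < 0\<close>
  show "((\<lambda>t. integral {t..0} (\<lambda>t. outer_prod (Lam2_branch \<alpha> \<mu> 1 \<i> g t) (Lam2_branch \<alpha> \<mu> 1 \<i> g t)))
      has_vector_derivative sgn x *\<^sub>R outer_prod (Lam2 \<alpha> \<mu> g x) (Lam2 \<alpha> \<mu> g x)) (at x)"
    by (simp add: at_within_interior[of x "{x - 1..0}"] Lam_nonpos)
qed (simp_all add: SM_nonneg SM_nonpos)

definition companion2 :: "complex \<Rightarrow> complex^2^2" where
  "companion2 c = (\<chi> i j. if i = 1 then (if j = 1 then 0 else 1) else (if j = 1 then c else 0))"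

lemma companion2_mult_nth: "(companion2 c *v y) $ 1 = y $ 2" "(companion2 c *v y) $ 2 = c * y $ 1"
  by (simp_all add: companion2_def matrix_vector_mult_def sum_2)

lemma Tp_Dp: "s\<^sup>2 = lam \<Longrightarrow> Tp s ** Dp s = companion2 (- lam) ** Tp s"
  by (auto simp: vec_eq_iff forall_2 matrix_matrix_mult_def sum_2 Tp_def Dp_def companion2_def
      power2_eq_square) (simp add: algebra_simps)

lemma Tm_Dm: "s\<^sup>2 = lam \<Longrightarrow> Tm s ** Dm s = companion2 lam ** Tm s"
  by (auto simp: vec_eq_iff forall_2 matrix_matrix_mult_def sum_2 Tm_def Dm_def companion2_def
      power2_eq_square)

lemma has_vector_derivative_similar_mexp:
  assumes "T ** D = G ** T"
  shows "((\<lambda>t. T *v (mexp (t *\<^sub>R D) *v w)) has_vector_derivative G *v (T *v (mexp (t *\<^sub>R D) *v w))) (at t)"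
  by (rule has_vector_derivative_eq_rhs[OF bounded_linear.has_vector_derivative[OF
        matrix_vector_mul_bounded_linear has_vector_derivative_mexp_scaleR]])
    (metis assms matrix_vector_mul_assoc matrix_mul_assoc)

lemma yv_pos: "0 < t \<Longrightarrow> yv s h t = Tp s *v (mexp (t *\<^sub>R Dp s) *v (matrix_inv (Tp s) *v h))"
  using mat_of_real_mult[of 1 t "Dp s"] by (simp add: yv_def matrix_vector_mul_assoc matrix_mul_assoc)

lemma yv_nonpos: "t \<le> 0 \<Longrightarrow> yv s h t = Tm s *v (mexp (t *\<^sub>R Dm s) *v (matrix_inv (Tm s) *v h))"
  using mat_of_real_mult[of 1 t "Dm s"] by (simp add: yv_def matrix_vector_mul_assoc matrix_mul_assoc)

lemma has_vector_derivative_yv: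
  assumes "x \<noteq> 0" and "s\<^sup>2 = lam"
  shows "(yv s h has_vector_derivative companion2 (- of_real (sgn x) * lam) *v yv s h x) (at x)"
proof (rule has_vector_derivative_by_sign[OF assms(1)])
  show "((\<lambda>t. Tp s *v (mexp (t *\<^sub>R Dp s) *v (matrix_inv (Tp s) *v h))) has_vector_derivative
      companion2 (- of_real (sgn x) * lam) *v yv s h x) (at x)" if "0 < x"
    using that has_vector_derivative_similar_mexp[OF Tp_Dp[OF assms(2)]] by (simp add: yv_pos)
  show "((\<lambda>t. Tm s *v (mexp (t *\<^sub>R Dm s) *v (matrix_inv (Tm s) *v h))) has_vector_derivative
      companion2 (- of_real (sgn x) * lam) *v yv s h x) (at x)" if "x < 0"
    using that has_vector_derivative_similar_mexp[OF Tm_Dm[OF assms(2)]] by (simp add: yv_nonpos)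
qed (simp_all add: yv_pos yv_nonpos)

lemma has_vector_derivative_yv_nth:
  assumes "x \<noteq> 0" and "s\<^sup>2 = lam"
  shows "((\<lambda>t. yv s h t $ 1) has_vector_derivative yv s h x $ 2) (at x)"
    and "((\<lambda>t. yv s h t $ 2) has_vector_derivative - (of_real (sgn x) * lam * yv s h x $ 1)) (at x)"
  using has_vector_derivative_vec_nth[OF has_vector_derivative_yv[OF assms, where h = h], where i = 1]
    has_vector_derivative_vec_nth[OF has_vector_derivative_yv[OF assms, where h = h], where i = 2]
  by (simp_all add: companion2_mult_nth)

lemma PiM_mult_vector: "PiM \<alpha> \<mu> g x *v y = y $ 1 *s Lam1 \<alpha> \<mu> g x + y $ 2 *s Lam2 \<alpha> \<mu> g x"
  by (simp add: vec_eq_iff matrix_vector_mult_def sum_2 PiM_def algebra_simps)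

lemma cadj_PiM_mult_nth:
  "(cadj (PiM \<alpha> \<mu> g x) *v w) $ 1 = hinner (Lam1 \<alpha> \<mu> g x) w"
  "(cadj (PiM \<alpha> \<mu> g x) *v w) $ 2 = hinner (Lam2 \<alpha> \<mu> g x) w"
  by (simp_all add: matrix_vector_mult_def cadj_def PiM_def hinner_def)

lemma Jmat_mult_nth: "(Jmat *v z) $ 1 = z $ 2" "(Jmat *v z) $ 2 = - z $ 1"
  by (simp_all add: matrix_vector_mult_def Jmat_def sum_2)

lemma ytil_nth_1:
  "ytil \<alpha> \<mu> g lam s h t $ 1 = yv s h t $ 1 - hinner (Lam2 \<alpha> \<mu> g t)
     (matrix_inv (SM \<alpha> \<mu> g t) *v (matrix_inv (\<alpha> ** \<alpha> - mat lam) *v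
       (yv s h t $ 1 *s Lam1 \<alpha> \<mu> g t + yv s h t $ 2 *s Lam2 \<alpha> \<mu> g t)))"
  by (simp add: ytil_def wA_def matrix_vector_mult_diff_rdistrib Jmat_mult_nth cadj_PiM_mult_nth
      PiM_mult_vector flip: matrix_vector_mul_assoc)

lemma XM_nth:
  "XM \<alpha> \<mu> g x $ 1 $ 1 = hinner (Lam2 \<alpha> \<mu> g x) (matrix_inv (SM \<alpha> \<mu> g x) *v Lam1 \<alpha> \<mu> g x)"
  "XM \<alpha> \<mu> g x $ 1 $ 2 = hinner (Lam2 \<alpha> \<mu> g x) (matrix_inv (SM \<alpha> \<mu> g x) *v Lam2 \<alpha> \<mu> g x)"
  "XM \<alpha> \<mu> g x $ 2 $ 2 = - hinner (Lam1 \<alpha> \<mu> g x) (matrix_inv (SM \<alpha> \<mu> g x) *v Lam2 \<alpha> \<mu> g x)"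
proof -
  have col: "M $ i $ j = (M *v axis j 1) $ i" for M :: "complex^2^2" and i j
    by (simp add: matrix_vector_mult_def axis_def if_distrib cong: if_cong)
  have "PiM \<alpha> \<mu> g x *v axis 1 1 = Lam1 \<alpha> \<mu> g x" "PiM \<alpha> \<mu> g x *v axis 2 1 = Lam2 \<alpha> \<mu> g x"
    by (simp_all add: PiM_mult_vector axis_def)
  thus "XM \<alpha> \<mu> g x $ 1 $ 1 = hinner (Lam2 \<alpha> \<mu> g x) (matrix_inv (SM \<alpha> \<mu> g x) *v Lam1 \<alpha> \<mu> g x)"
    "XM \<alpha> \<mu> g x $ 1 $ 2 = hinner (Lam2 \<alpha> \<mu> g x) (matrix_inv (SM \<alpha> \<mu> g x) *v Lam2 \<alpha> \<mu> g x)"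
    "XM \<alpha> \<mu> g x $ 2 $ 2 = - hinner (Lam1 \<alpha> \<mu> g x) (matrix_inv (SM \<alpha> \<mu> g x) *v Lam2 \<alpha> \<mu> g x)"
    unfolding col[of "XM \<alpha> \<mu> g x"]
    by (simp_all add: XM_def Jmat_mult_nth cadj_PiM_mult_nth flip: matrix_vector_mul_assoc)
qed

theorem corollary8p3:
  fixes L :: ereal and \<alpha> :: "complex^'n^'n" and g :: "complex^'n"
    and \<mu> lam s :: complex and h :: "complex^2"
  assumes "0 < L"
    and "cnj \<mu> = - \<mu>"
    and "det (mat \<mu> ** \<alpha> + mat 1) \<noteq> 0" and "det (mat \<mu> ** \<alpha> - mat 1) \<noteq> 0"
    and "det (mat \<mu> ** \<alpha> + mat \<i>) \<noteq> 0" and "det (mat \<mu> ** \<alpha> - mat \<i>) \<noteq> 0"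
    and "\<And>x. x \<noteq> 0 \<Longrightarrow> ereal \<bar>x\<bar> < L \<Longrightarrow> det (SM \<alpha> \<mu> g x) \<noteq> 0"
    and "lam \<noteq> 0" and "s ^ 2 = lam"
    and "det (\<alpha> ** \<alpha> - mat lam) \<noteq> 0"
  shows "\<exists>d1 d2. \<forall>x. x \<noteq> 0 \<and> ereal \<bar>x\<bar> < L \<longrightarrow>
           ((\<lambda>t. ytil \<alpha> \<mu> g lam s h t $ 1) has_vector_derivative d1 x) (at x)
         \<and> (d1 has_vector_derivative d2 x) (at x)
         \<and> - d2 x + qbreve \<alpha> \<mu> g x * ytil \<alpha> \<mu> g lam s h x $ 1
             = lam * of_real (sgn x) * ytil \<alpha> \<mu> g lam s h x $ 1"
proof -
  have "\<exists>d1 d2. \<forall>x\<in>{x. x \<noteq> 0 \<and> ereal \<bar>x\<bar> < L}.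
           ((\<lambda>t. ytil \<alpha> \<mu> g lam s h t $ 1) has_vector_derivative d1 x) (at x)
         \<and> (d1 has_vector_derivative d2 x) (at x)
         \<and> - d2 x + qbreve \<alpha> \<mu> g x * ytil \<alpha> \<mu> g lam s h x $ 1
             = lam * of_real (sgn x) * ytil \<alpha> \<mu> g lam s h x $ 1"
    unfolding ytil_nth_1 qbreve_def XM_nth
    by (rule darboux_transform_ode)
      (use assms in \<open>auto intro: has_vector_derivative_Lam1 has_vector_derivative_Lam2
        has_vector_derivative_SM has_vector_derivative_yv_nth SM_commutator\<close>)
  thus ?thesis by auto
qed

end
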